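(* If $M\to_{\beta\mu}N$ and $\Gamma\vdash N:\delta\mid\Delta$ is derivable in the intersection type assignment system, then $\Gamma\vdash M:\delta\mid\Delta$ is derivable.
   Context: $\lambda\mu$ terms and commands: $M::=x\mid\lambda x.M\mid MN\mid\mu\alpha.\mathsf C$ and $\mathsf C::=[\alpha]M$. Structural substitution $T[\alpha\Leftarrow L]$ replaces, recursively, every subterm $[\alpha]N$ by $[\alpha](N[\alpha\Leftarrow L])L$. $\to_{\beta\mu}$ is the compatible closure of: - $(\lambda x.M)N\to M[N/x]$; - $(\mu\alpha.\mathsf C)N\to\mu\alpha.\mathsf C[\alpha\Leftarrow N]$; - $[\alpha]\mu\beta.\mathsf C\to\mathsf C[\alpha/\beta]$. Types (for a fixed $\omega$-algebraic lattice $R$): - $\Lambda_R$: $\rho::=\psi_a\mid\omega\mid\rho\wedge\rho$; - $\Lambda_D$: $\delta::=\rho\mid\kappa\to\rho\mid\omega\mid\delta\wedge\delta$; - $\Lambda_C$: $\kappa::=\delta\times\kappa\mid\omega\mid\kappa\wedge\kappa$. The relations $\le_R,\le_D,\le_C$ are the least reflexive, transitive relations with $\sigma\wedge\tau\le\sigma,\tau$, $\sigma\le\omega$, $\rho\le\sigma,\tau\Rightarrow\rho\le\sigma\wedge\tau$, and additionally: - $\psi_\bot\sim\omega$ and $\psi_{a\sqcup b}\sim\psi_a\wedge\psi_b$; - $\le_R\subseteq\le_D$; - $\omega\le_D\omega\to\omega$; - $\psi_a\le_D\omega\to\psi_a\le_D\psi_a$; - $\omega\le_C\omega\times\omega$;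 - $(\kappa\to\rho_1)\wedge(\kappa\to\rho_2)\le_D\kappa\to(\rho_1\wedge\rho_2)$; - $(\delta_1\times\kappa_1)\wedge(\delta_2\times\kappa_2)\le_C(\delta_1\wedge\delta_2)\times(\kappa_1\wedge\kappa_2)$; - $\to$ is contravariant in $\Lambda_C$ and covariant in $\Lambda_R$; - $\times$ is covariant in both arguments. Type assignment. Bases $\Gamma$ are finite maps from variables to $\Lambda_D$, and contexts $\Delta$ are finite maps from names to $\Lambda_C$. $\Gamma(x)$ and $\Delta(\alpha)$ are $\omega$ outside the domain. The rules are: - (Ax) $\Gamma,x{:}\delta\vdash x:\delta\mid\Delta$. - (Abs) From $\Gamma\vdash M:\kappa\to\rho\mid\Delta$, $\Gamma(x)=\delta$, infer $\Gamma\setminus x\vdash\lambda x.M:(\delta\times\kappa)\to\rho\mid\Delta$. - (App) From $\Gamma\vdash M:(\delta\times\kappa)\to\rho\mid\Delta$ and $\Gamma\vdash N:\delta\mid\Delta$, infer $\Gamma\vdash MN:\kappa\to\rho\mid\Delta$. - (Cmd) From $\Gamma\vdash M:\delta\mid\Delta$, $\Delta(\alpha)=\kappa$, infer $\Gamma\vdash[\alpha]M:\delta\times\kappa\mid\Delta$. - ($\mu$) From $\Gamma\vdash\mathsf C:(\kappa'\to\rho)\times\kappa'\mid\Delta$, $\Delta(\alpha)=\kappa$, infer $\Gamma\vdash\mu\alpha.\mathsf C:\kappa\to\rho\mid\Delta\setminus\alpha$. - ($\wedge$), ($\omega$) and ($\le$). *)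

theory Defs
  imports Main "HOL-Library.Countable_Set"
begin

definition directed_set :: "'a::complete_lattice set \<Rightarrow> bool" where
  "directed_set D \<longleftrightarrow> D \<noteq> {} \<and> (\<forall>x\<in>D. \<forall>y\<in>D. \<exists>z\<in>D. x \<le> z \<and> y \<le> z)"

definition compact_el :: "'a::complete_lattice \<Rightarrow> bool" where
  "compact_el a \<longleftrightarrow> (\<forall>D. directed_set D \<and> a \<le> Sup D \<longrightarrow> (\<exists>d\<in>D. a \<le> d))"

definition omega_algebraic :: "'a::complete_lattice itself \<Rightarrow> bool" where
  "omega_algebraic (_ :: 'a itself) \<longleftrightarrow>
     (\<forall>x::'a. x = Sup {c. compact_el c \<and> c \<le> x}) \<and> countable {c::'a. compact_el c}"

section \<open>lambda-mu terms (de Bruijn indices, separately for variables and names)\<close>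

datatype trm = Var nat | Lam trm | App trm trm | Mu cmd
and cmd = Cmd nat trm

primrec liftv :: "nat \<Rightarrow> trm \<Rightarrow> trm" and liftv_c :: "nat \<Rightarrow> cmd \<Rightarrow> cmd" where
  "liftv k (Var i) = (if i < k then Var i else Var (Suc i))"
| "liftv k (Lam M) = Lam (liftv (Suc k) M)"
| "liftv k (App M N) = App (liftv k M) (liftv k N)"
| "liftv k (Mu C) = Mu (liftv_c k C)"
| "liftv_c k (Cmd a M) = Cmd a (liftv k M)"

primrec liftn :: "nat \<Rightarrow> trm \<Rightarrow> trm" and liftn_c :: "nat \<Rightarrow> cmd \<Rightarrow> cmd" where
  "liftn k (Var i) = Var i"
| "liftn k (Lam M) = Lam (liftn k M)"
| "liftn k (App M N) = App (liftn k M) (liftn k N)"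
| "liftn k (Mu C) = Mu (liftn_c (Suc k) C)"
| "liftn_c k (Cmd a M) = Cmd (if a < k then a else Suc a) (liftn k M)"

primrec substv :: "nat \<Rightarrow> trm \<Rightarrow> trm \<Rightarrow> trm" and substv_c :: "nat \<Rightarrow> trm \<Rightarrow> cmd \<Rightarrow> cmd" where
  "substv k N (Var i) = (if i < k then Var i else if i = k then N else Var (i - 1))"
| "substv k N (Lam M) = Lam (substv (Suc k) (liftv 0 N) M)"
| "substv k N (App M P) = App (substv k N M) (substv k N P)"
| "substv k N (Mu C) = Mu (substv_c k (liftn 0 N) C)"
| "substv_c k N (Cmd a M) = Cmd a (substv k N M)"

primrec renn :: "nat \<Rightarrow> nat \<Rightarrow> trm \<Rightarrow> trm" and renn_c :: "nat \<Rightarrow> nat \<Rightarrow> cmd \<Rightarrow> cmd" where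
  "renn k a (Var i) = Var i"
| "renn k a (Lam M) = Lam (renn k a M)"
| "renn k a (App M N) = App (renn k a M) (renn k a N)"
| "renn k a (Mu C) = Mu (renn_c (Suc k) (Suc a) C)"
| "renn_c k a (Cmd b M) =
     Cmd (if b < k then b else if b = k then a else b - 1) (renn k a M)"

primrec strsub :: "nat \<Rightarrow> trm \<Rightarrow> trm \<Rightarrow> trm" and strsub_c :: "nat \<Rightarrow> trm \<Rightarrow> cmd \<Rightarrow> cmd" where
  "strsub k L (Var i) = Var i"
| "strsub k L (Lam M) = Lam (strsub k (liftv 0 L) M)"
| "strsub k L (App M N) = App (strsub k L M) (strsub k L N)"
| "strsub k L (Mu C) = Mu (strsub_c (Suc k) (liftn 0 L) C)"
| "strsub_c k L (Cmd b M) =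
     (if b = k then Cmd b (App (strsub k L M) L) else Cmd b (strsub k L M))"

inductive red :: "trm \<Rightarrow> trm \<Rightarrow> bool" and red_c :: "cmd \<Rightarrow> cmd \<Rightarrow> bool" where
  beta: "red (App (Lam M) N) (substv 0 N M)"
| mu:   "red (App (Mu C) N) (Mu (strsub_c 0 (liftn 0 N) C))"
| ren:  "red_c (Cmd a (Mu C)) (renn_c 0 a C)"
| lam:  "red M M' \<Longrightarrow> red (Lam M) (Lam M')"
| appL: "red M M' \<Longrightarrow> red (App M N) (App M' N)"
| appR: "red N N' \<Longrightarrow> red (App M N) (App M N')"
| muC:  "red_c C C' \<Longrightarrow> red (Mu C) (Mu C')"
| cmd:  "red M M' \<Longrightarrow> red_c (Cmd a M) (Cmd a M')"

datatype 'a ty = Psi 'a | Om | And "'a ty" "'a ty" | Arr "'a ty" "'a ty" | Prod "'a ty" "'a ty"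

fun isR :: "'a ty \<Rightarrow> bool" where
  "isR (Psi a) = True"
| "isR Om = True"
| "isR (And s t) = (isR s \<and> isR t)"
| "isR (Arr _ _) = False"
| "isR (Prod _ _) = False"

fun isD :: "'a ty \<Rightarrow> bool" and isC :: "'a ty \<Rightarrow> bool" where
  "isD (Psi a) = True"
| "isD Om = True"
| "isD (And s t) = (isD s \<and> isD t)"
| "isD (Arr k r) = (isC k \<and> isR r)"
| "isD (Prod _ _) = False"
| "isC (Psi a) = False"
| "isC Om = True"
| "isC (And s t) = (isC s \<and> isC t)"
| "isC (Arr _ _) = False"
| "isC (Prod d k) = (isD d \<and> isC k)"

inductive leR :: "'a::complete_lattice ty \<Rightarrow> 'a ty \<Rightarrow> bool"
  and leD :: "'a ty \<Rightarrow> 'a ty \<Rightarrow> bool"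
  and leC :: "'a ty \<Rightarrow> 'a ty \<Rightarrow> bool" where
  R_refl: "isR s \<Longrightarrow> leR s s"
| R_trans: "leR s t \<Longrightarrow> leR t u \<Longrightarrow> leR s u"
| R_andL: "isR s \<Longrightarrow> isR t \<Longrightarrow> leR (And s t) s"
| R_andR: "isR s \<Longrightarrow> isR t \<Longrightarrow> leR (And s t) t"
| R_top: "isR s \<Longrightarrow> leR s Om"
| R_glb: "leR r s \<Longrightarrow> leR r t \<Longrightarrow> leR r (And s t)"
| R_bot1: "leR (Psi bot) Om"
| R_bot2: "leR Om (Psi bot)"
| R_sup1: "leR (Psi (sup a b)) (And (Psi a) (Psi b))"
| R_sup2: "leR (And (Psi a) (Psi b)) (Psi (sup a b))"
| D_refl: "isD s \<Longrightarrow> leD s s"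
| D_trans: "leD s t \<Longrightarrow> leD t u \<Longrightarrow> leD s u"
| D_andL: "isD s \<Longrightarrow> isD t \<Longrightarrow> leD (And s t) s"
| D_andR: "isD s \<Longrightarrow> isD t \<Longrightarrow> leD (And s t) t"
| D_top: "isD s \<Longrightarrow> leD s Om"
| D_glb: "leD r s \<Longrightarrow> leD r t \<Longrightarrow> leD r (And s t)"
| D_R: "leR s t \<Longrightarrow> leD s t"
| D_om_arr: "leD Om (Arr Om Om)"
| D_psi1: "leD (Psi a) (Arr Om (Psi a))"
| D_psi2: "leD (Arr Om (Psi a)) (Psi a)"
| D_arr_and: "isC k \<Longrightarrow> isR r1 \<Longrightarrow> isR r2 \<Longrightarrow>
    leD (And (Arr k r1) (Arr k r2)) (Arr k (And r1 r2))"
| D_arr: "leC k' k \<Longrightarrow> leR r r' \<Longrightarrow> leD (Arr k r) (Arr k' r')"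
| C_refl: "isC s \<Longrightarrow> leC s s"
| C_trans: "leC s t \<Longrightarrow> leC t u \<Longrightarrow> leC s u"
| C_andL: "isC s \<Longrightarrow> isC t \<Longrightarrow> leC (And s t) s"
| C_andR: "isC s \<Longrightarrow> isC t \<Longrightarrow> leC (And s t) t"
| C_top: "isC s \<Longrightarrow> leC s Om"
| C_glb: "leC r s \<Longrightarrow> leC r t \<Longrightarrow> leC r (And s t)"
| C_om_prod: "leC Om (Prod Om Om)"
| C_prod_and: "isD d1 \<Longrightarrow> isD d2 \<Longrightarrow> isC k1 \<Longrightarrow> isC k2 \<Longrightarrow>
    leC (And (Prod d1 k1) (Prod d2 k2)) (Prod (And d1 d2) (And k1 k2))"
| C_prod: "leD d d' \<Longrightarrow> leC k k' \<Longrightarrow> leC (Prod d k) (Prod d' k')"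

text \<open>Bases and contexts are total functions (value Om outside the domain);
  de Bruijn index 0 is the most recently bound variable / name.\<close>

definition scons :: "'a ty \<Rightarrow> (nat \<Rightarrow> 'a ty) \<Rightarrow> nat \<Rightarrow> 'a ty" where
  "scons d G = (\<lambda>i. if i = 0 then d else G (i - 1))"

inductive typing :: "(nat \<Rightarrow> 'a::complete_lattice ty) \<Rightarrow> trm \<Rightarrow> 'a ty \<Rightarrow> (nat \<Rightarrow> 'a ty) \<Rightarrow> bool"
  and typing_c :: "(nat \<Rightarrow> 'a ty) \<Rightarrow> cmd \<Rightarrow> 'a ty \<Rightarrow> (nat \<Rightarrow> 'a ty) \<Rightarrow> bool" where
  Ax: "typing G (Var x) (G x) D"
| Abs: "isD d \<Longrightarrow> typing (scons d G) M (Arr k r) D \<Longrightarrow> typing G (Lam M) (Arr (Prod d k) r) D"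
| App: "typing G M (Arr (Prod d k) r) D \<Longrightarrow> typing G N d D \<Longrightarrow> typing G (App M N) (Arr k r) D"
| Cmd: "typing G M d D \<Longrightarrow> typing_c G (Cmd a M) (Prod d (D a)) D"
| Mu: "isC k \<Longrightarrow> typing_c G C (Prod (Arr k' r) k') (scons k D) \<Longrightarrow> typing G (Mu C) (Arr k r) D"
| And: "typing G M s D \<Longrightarrow> typing G M t D \<Longrightarrow> typing G M (And s t) D"
| Omega: "typing G M Om D"
| Sub: "typing G M s D \<Longrightarrow> leD s t \<Longrightarrow> typing G M t D"
| And_c: "typing_c G C s D \<Longrightarrow> typing_c G C t D \<Longrightarrow> typing_c G C (And s t) D"
| Omega_c: "typing_c G C Om D"
| Sub_c: "typing_c G C s D \<Longrightarrow> leC s t \<Longrightarrow> typing_c G C t D"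

end

theory Submission
  imports Defs
begin

text \<open>
  Subject expansion is proved for each kind of redex and then lifted through term contexts by
  induction on the typing of the reduct. For a \<open>\<beta>\<close>-redex, the occurrences of \<open>N\<close> in
  \<open>M[N/x]\<close> are typed with finitely many types; their intersection is a type of \<open>N\<close> that can be
  assigned to \<open>x\<close>, and since every type is an intersection of arrows (\<open>\<psi>\<^sub>a \<sim> \<omega> \<rightarrow> \<psi>\<^sub>a\<close>),
  the abstraction rule recovers every type of the contractum. For a \<open>\<mu>\<close>-redex
  \<open>(\<mu>\<alpha>.C) L\<close>, each subterm \<open>[\<alpha>](T L)\<close> of \<open>C[\<alpha> \<Leftarrow> L]\<close> contributes a type \<open>e\<close> of \<open>L\<close>;
  assigning \<open>e \<times> \<kappa>\<close> instead of \<open>\<kappa>\<close> to \<open>\<alpha>\<close> turns \<open>[\<alpha>](T L)\<close> back into \<open>[\<alpha>]T\<close>, and again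
  the intersection of all these \<open>e\<close> is a single type of \<open>L\<close>. A renaming \<open>C[a/\<beta>]\<close> is undone
  by giving \<open>\<beta>\<close> the type of \<open>a\<close>.
\<close>

lemma isR_imp_isD: "isR s \<Longrightarrow> isD s"
  by (induction s) auto

lemma le_sorts:
  shows "leR s t \<Longrightarrow> isR s \<and> isR t"
    and "leD s t \<Longrightarrow> isD s \<and> isD t"
    and "leC s t \<Longrightarrow> isC s \<and> isC t"
  by (induct rule: leR_leD_leC.inducts) (auto simp: isR_imp_isD)

declare leR_leD_leC.C_trans [trans]

lemma leD_And_iff: "leD d (And d1 d2) \<longleftrightarrow> leD d d1 \<and> leD d d2"
  by (meson D_andL D_andR D_glb D_trans isD.simps(3) le_sorts(2))

definition well_sorted :: "(nat \<Rightarrow> 'a ty) \<Rightarrow> (nat \<Rightarrow> 'a ty) \<Rightarrow> bool" where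
  "well_sorted G D \<longleftrightarrow> (\<forall>x. isD (G x)) \<and> (\<forall>a. isC (D a))"

lemma well_sorted_scons_var: "isD d \<Longrightarrow> well_sorted G D \<Longrightarrow> well_sorted (scons d G) D"
  by (simp add: well_sorted_def scons_def)

lemma well_sorted_scons_name: "isC k \<Longrightarrow> well_sorted G D \<Longrightarrow> well_sorted G (scons k D)"
  by (simp add: well_sorted_def scons_def)

lemma typing_sorts:
  shows "typing G M t D \<Longrightarrow> well_sorted G D \<Longrightarrow> isD t"
    and "typing_c G C t D \<Longrightarrow> well_sorted G D \<Longrightarrow> isC t"
  by (induct rule: typing_typing_c.inducts)
    (auto simp: well_sorted_def scons_def dest: le_sorts)

section \<open>Pushing an argument onto a continuation\<close>

text \<open>If \<open>L : e\<close> and \<open>M L : t\<close> then \<open>M : push_arg e t\<close>; similarly \<open>push_arg_c e\<close> turns the type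
  of \<open>[\<alpha>](M L)\<close> into that of \<open>[\<alpha>]M\<close> once the continuation type of \<open>\<alpha>\<close> is prefixed by \<open>e\<close>.\<close>

fun push_arg :: "'a ty \<Rightarrow> 'a ty \<Rightarrow> 'a ty" where
  "push_arg e (Psi a) = Arr (Prod e Om) (Psi a)"
| "push_arg e Om = Om"
| "push_arg e (And s t) = And (push_arg e s) (push_arg e t)"
| "push_arg e (Arr k r) = Arr (Prod e k) r"
| "push_arg e (Prod _ _) = Om"

fun push_arg_c :: "'a ty \<Rightarrow> 'a ty \<Rightarrow> 'a ty" where
  "push_arg_c e (Prod d k) = Prod (push_arg e d) (Prod e k)"
| "push_arg_c e Om = Prod Om (Prod e Om)"
| "push_arg_c e (And s t) = And (push_arg_c e s) (push_arg_c e t)"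
| "push_arg_c e _ = Om"

lemma isD_push_arg: "isD e \<Longrightarrow> isD s \<Longrightarrow> isD (push_arg e s)"
  by (induction s) auto

lemma isC_push_arg_c: "isD e \<Longrightarrow> isC s \<Longrightarrow> isC (push_arg_c e s)"
  by (induction s) (auto simp: isD_push_arg)

lemma push_arg_c_le_top: "isD e \<Longrightarrow> isC s \<Longrightarrow> leC (push_arg_c e s) (Prod Om (Prod e Om))"
proof (induction s)
  case (Prod d k)
  then show ?case by (auto intro!: C_prod D_top isD_push_arg D_refl C_top)
next
  case (And s t)
  then show ?case by (auto intro: C_trans C_andL isC_push_arg_c)
qed (auto intro: C_refl)

lemma push_arg_mono:
  fixes e :: "'a::complete_lattice ty"
  assumes "isD e"
  shows "leR s t \<Longrightarrow> leD (push_arg e s) (push_arg e t)"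
    and "leD s t \<Longrightarrow> leD (push_arg e s) (push_arg e t)"
    and "leC s t \<Longrightarrow> leC (push_arg_c e s) (push_arg_c e t)"
  using assms
proof (induct rule: leR_leD_leC.inducts)
  case R_bot2
  then show ?case
    by simp (rule D_trans[OF D_om_arr D_arr[OF C_top leR_leD_leC.R_bot2]], simp)
next
  case (R_sup1 a b)
  then show ?case
    by (auto intro!: D_glb D_arr C_refl R_trans[OF leR_leD_leC.R_sup1] R_andL R_andR)
next
  case (R_sup2 a b)
  then show ?case
    by simp (rule D_trans[OF D_arr_and D_arr[OF C_refl leR_leD_leC.R_sup2]], auto)
next
  case D_om_arr
  then show ?case
    by simp (rule D_trans[OF leR_leD_leC.D_om_arr D_arr[OF C_top R_refl]], auto)
next
  case (C_top s)
  then show ?case by (simp add: push_arg_c_le_top)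
next
  case (C_prod_and d1 d2 k1 k2)
  have "leC (And (Prod e k1) (Prod e k2)) (Prod (And e e) (And k1 k2))"
    using C_prod_and by (auto intro!: leR_leD_leC.C_prod_and)
  also have "leC \<dots> (Prod e (And k1 k2))"
    using C_prod_and by (auto intro!: C_prod D_andL C_refl)
  finally have "leC (And (Prod e k1) (Prod e k2)) (Prod e (And k1 k2))" .
  with C_prod_and show ?case
    by simp (rule C_trans[OF leR_leD_leC.C_prod_and C_prod], auto intro!: isD_push_arg D_refl)
qed (auto intro: leR_leD_leC.intros isD_push_arg isC_push_arg_c isR_imp_isD)

lemma typing_from_arrows:
  assumes "isD t"
    and "\<And>k r. isC k \<Longrightarrow> isR r \<Longrightarrow> leD t (Arr k r) \<Longrightarrow> typing G P (Arr k r) D"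
  shows "typing G P t D"
  using assms
proof (induction t)
  case (Psi a)
  then have "typing G P (Arr Om (Psi a)) D" by (simp add: D_psi1)
  then show ?case using D_psi2 by (rule Sub)
next
  case (And s u)
  have "typing G P s D"
    using And.prems by (intro And.IH(1)) (auto intro: D_trans[OF D_andL])
  moreover have "typing G P u D"
    using And.prems by (intro And.IH(2)) (auto intro: D_trans[OF D_andR])
  ultimately show ?case by (rule typing_typing_c.And)
next
  case (Arr k r)
  then show ?case using D_refl[OF Arr.prems(1)] by simp
qed (auto intro: Omega)

definition insert_at :: "nat \<Rightarrow> 'a \<Rightarrow> (nat \<Rightarrow> 'a) \<Rightarrow> nat \<Rightarrow> 'a" where
  "insert_at j e G = (\<lambda>i. if i < j then G i else if i = j then e else G (i - 1))"

definition drop_at :: "nat \<Rightarrow> (nat \<Rightarrow> 'a) \<Rightarrow> nat \<Rightarrow> 'a" where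
  "drop_at j G = (\<lambda>i. G (if i < j then i else Suc i))"

lemma scons_Suc [simp]: "scons d G (Suc i) = G i"
  by (simp add: scons_def)

lemma insert_at_0: "insert_at 0 e G = scons e G"
  by (auto simp: insert_at_def scons_def fun_eq_iff)

lemma insert_at_Suc_scons: "insert_at (Suc j) e (scons d G) = scons d (insert_at j e G)"
  by (auto simp: insert_at_def scons_def fun_eq_iff)

lemma drop_at_0_scons: "drop_at 0 (scons d G) = G"
  by (auto simp: drop_at_def scons_def fun_eq_iff)

lemma drop_at_Suc_scons: "drop_at (Suc j) (scons d G) = scons d (drop_at j G)"
  by (auto simp: drop_at_def scons_def fun_eq_iff)

lemma typing_induct [consumes 1, case_names Ax Abs App Mu And Omega Sub]:
  assumes "typing G M t D"
    and "\<And>G x D. P G (Var x) (G x) D"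
    and "\<And>d G M k r D. isD d \<Longrightarrow> typing (scons d G) M (Arr k r) D \<Longrightarrow>
      P (scons d G) M (Arr k r) D \<Longrightarrow> P G (Lam M) (Arr (Prod d k) r) D"
    and "\<And>G M d k r D N. typing G M (Arr (Prod d k) r) D \<Longrightarrow> P G M (Arr (Prod d k) r) D \<Longrightarrow>
      typing G N d D \<Longrightarrow> P G N d D \<Longrightarrow> P G (App M N) (Arr k r) D"
    and "\<And>k G C k' r D. isC k \<Longrightarrow> typing_c G C (Prod (Arr k' r) k') (scons k D) \<Longrightarrow>
      P G (Mu C) (Arr k r) D"
    and "\<And>G M s D t. typing G M s D \<Longrightarrow> P G M s D \<Longrightarrow> typing G M t D \<Longrightarrow> P G M t D \<Longrightarrow>
      P G M (And s t) D"
    and "\<And>G M D. P G M Om D"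
    and "\<And>G M s D t. typing G M s D \<Longrightarrow> P G M s D \<Longrightarrow> leD s t \<Longrightarrow> P G M t D"
  shows "P G M t D"
  using assms(1)
  by (induct rule: typing_typing_c.inducts(1)[where ?P2.0 = "\<lambda>_ _ _ _. True"])
    (blast intro: assms(2-))+

lemma liftv_eq_iff:
  "Var x = liftv j N \<longleftrightarrow> (\<exists>y. N = Var y \<and> x = (if y < j then y else Suc y))"
  "Lam P = liftv j N \<longleftrightarrow> (\<exists>N0. N = Lam N0 \<and> P = liftv (Suc j) N0)"
  "App P Q = liftv j N \<longleftrightarrow> (\<exists>N1 N2. N = App N1 N2 \<and> P = liftv j N1 \<and> Q = liftv j N2)"
  "Mu C = liftv j N \<longleftrightarrow> (\<exists>C0. N = Mu C0 \<and> C = liftv_c j C0)"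
  "Cmd a P = liftv_c j C1 \<longleftrightarrow> (\<exists>N. C1 = Cmd a N \<and> P = liftv j N)"
  by (cases N; auto; fail)+ (cases C1; auto)

lemma liftn_eq_iff:
  "Var x = liftn j N \<longleftrightarrow> N = Var x"
  "Lam P = liftn j N \<longleftrightarrow> (\<exists>N0. N = Lam N0 \<and> P = liftn j N0)"
  "App P Q = liftn j N \<longleftrightarrow> (\<exists>N1 N2. N = App N1 N2 \<and> P = liftn j N1 \<and> Q = liftn j N2)"
  "Mu C = liftn j N \<longleftrightarrow> (\<exists>C0. N = Mu C0 \<and> C = liftn_c (Suc j) C0)"
  "Cmd a P = liftn_c j C1 \<longleftrightarrow>
    (\<exists>b N. C1 = Cmd b N \<and> a = (if b < j then b else Suc b) \<and> P = liftn j N)"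
  by (cases N; auto; fail)+ (cases C1; auto)

lemma typing_liftv_strengthen:
  shows "typing G (liftv j N) t D \<Longrightarrow> typing (drop_at j G) N t D"
    and "typing_c G (liftv_c j C) t D \<Longrightarrow> typing_c (drop_at j G) C t D"
proof (induction G "liftv j N" t D and G "liftv_c j C" t D
    arbitrary: j N and j C rule: typing_typing_c.inducts)
  case (Ax G x D)
  then obtain y where "N = Var y" "x = (if y < j then y else Suc y)" by (auto simp: liftv_eq_iff)
  then show ?case using typing_typing_c.Ax[of "drop_at j G" y D] by (simp add: drop_at_def)
next
  case (Abs d G M k r D)
  then obtain N0 where "N = Lam N0" "M = liftv (Suc j) N0" by (auto simp: liftv_eq_iff)
  then show ?case
    using Abs(1) Abs(3)[of "Suc j" N0] by (auto intro!: typing_typing_c.Abs simp: drop_at_Suc_scons)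
next
  case (App G M d k r D N')
  then obtain N1 N2 where "N = App N1 N2" "M = liftv j N1" "N' = liftv j N2"
    by (auto simp: liftv_eq_iff)
  then show ?case using App(2)[of j N1] App(4)[of j N2] by (auto intro: typing_typing_c.App)
qed (auto simp: liftv_eq_iff intro: typing_typing_c.intros)

lemma typing_liftn_strengthen:
  shows "typing G (liftn j N) t D \<Longrightarrow> typing G N t (drop_at j D)"
    and "typing_c G (liftn_c j C) t D \<Longrightarrow> typing_c G C t (drop_at j D)"
proof (induction G "liftn j N" t D and G "liftn_c j C" t D
    arbitrary: j N and j C rule: typing_typing_c.inducts)
  case (Cmd G M d D a)
  then obtain b N where "C = Cmd b N" "a = (if b < j then b else Suc b)" "M = liftn j N"
    by (auto simp: liftn_eq_iff)
  then show ?case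
    using Cmd typing_typing_c.Cmd[of G N d "drop_at j D" b] by (auto simp: drop_at_def)
next
  case (Mu k G C k' r D)
  then obtain C0 where "N = Mu C0" "C = liftn_c (Suc j) C0" by (auto simp: liftn_eq_iff)
  then show ?case
    using Mu(1) Mu(3)[of "Suc j" C0] by (auto intro!: typing_typing_c.Mu simp: drop_at_Suc_scons)
next
  case (App G M d k r D N')
  then obtain N1 N2 where "N = App N1 N2" "M = liftn j N1" "N' = liftn j N2"
    by (auto simp: liftn_eq_iff)
  then show ?case using App(2)[of j N1] App(4)[of j N2] by (auto intro: typing_typing_c.App)
qed (auto simp: liftn_eq_iff intro: typing_typing_c.intros)

section \<open>Inverting substitution\<close>

text \<open>Quantifying over all \<open>d \<le> d0\<close> makes these facts closed under conjunction (take the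
  intersection of the two witnesses); this is how the types of several occurrences of a
  substituted term are merged.\<close>
definition typed_below ::
    "(nat \<Rightarrow> 'a::complete_lattice ty) \<Rightarrow> trm \<Rightarrow> (nat \<Rightarrow> 'a ty) \<Rightarrow> ('a ty \<Rightarrow> bool) \<Rightarrow> bool"
  where "typed_below G N D Q \<longleftrightarrow> (\<exists>d0. typing G N d0 D \<and> (\<forall>d. leD d d0 \<longrightarrow> Q d))"

lemma typed_below_trivial: "(\<And>d. isD d \<Longrightarrow> Q d) \<Longrightarrow> typed_below G N D Q"
  unfolding typed_below_def by (metis Omega le_sorts(2))

lemma typed_below_mono:
  "typed_below G N D Q \<Longrightarrow> (\<And>d. isD d \<Longrightarrow> Q d \<Longrightarrow> Q' d) \<Longrightarrow> typed_below G N D Q'"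
  unfolding typed_below_def by (meson le_sorts(2))

lemma typed_below_combine:
  assumes "typed_below G N D Q1" and "typed_below G N D Q2"
    and "\<And>d. isD d \<Longrightarrow> Q1 d \<Longrightarrow> Q2 d \<Longrightarrow> Q d"
  shows "typed_below G N D Q"
proof -
  obtain d1 d2 where "typing G N d1 D" "\<forall>d. leD d d1 \<longrightarrow> Q1 d"
    and "typing G N d2 D" "\<forall>d. leD d d2 \<longrightarrow> Q2 d"
    using assms(1,2) unfolding typed_below_def by blast
  with assms(3) show ?thesis unfolding typed_below_def
    by (intro exI[of _ "And d1 d2"])
      (auto intro: typing_typing_c.And simp: leD_And_iff dest: le_sorts(2))
qed

lemma typed_below_liftv: "typed_below (scons e G) (liftv 0 N) D Q \<Longrightarrow> typed_below G N D Q"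
  unfolding typed_below_def using typing_liftv_strengthen(1)[of _ 0] by (metis drop_at_0_scons)

lemma typed_below_liftn: "typed_below G (liftn 0 N) (scons k D) Q \<Longrightarrow> typed_below G N D Q"
  unfolding typed_below_def using typing_liftn_strengthen(1)[of _ 0] by (metis drop_at_0_scons)

lemma typed_below_witness:
  assumes "typed_below G N D Q" and "well_sorted G D"
  obtains d where "typing G N d D" and "Q d"
  using assms unfolding typed_below_def by (meson D_refl typing_sorts(1))

lemma typed_below_Var:
  "typing G N t D \<Longrightarrow> typed_below G N D (\<lambda>d. typing (insert_at k d G) (Var k) t D)"
  unfolding typed_below_def using Ax[of "insert_at k _ G" k D]
  by (auto simp: insert_at_def intro: Sub)

lemma substv_eq_iff:
  "Var x = substv k N M \<longleftrightarrow>
    (M = Var k \<and> N = Var x) \<or> (\<exists>i. M = Var i \<and> i \<noteq> k \<and> x = (if i < k then i else i - 1))"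
  "Lam P = substv k N M \<longleftrightarrow>
    (M = Var k \<and> N = Lam P) \<or> (\<exists>M0. M = Lam M0 \<and> P = substv (Suc k) (liftv 0 N) M0)"
  "App P Q = substv k N M \<longleftrightarrow>
    (M = Var k \<and> N = App P Q) \<or> (\<exists>M1 M2. M = App M1 M2 \<and> P = substv k N M1 \<and> Q = substv k N M2)"
  "Mu C = substv k N M \<longleftrightarrow>
    (M = Var k \<and> N = Mu C) \<or> (\<exists>C0. M = Mu C0 \<and> C = substv_c k (liftn 0 N) C0)"
  "Cmd a P = substv_c k N C1 \<longleftrightarrow> (\<exists>M. C1 = Cmd a M \<and> P = substv k N M)"
  by (cases M; auto; fail)+ (cases C1; auto)

lemma typing_substv_expand:
  shows "typing G (substv k N M) t D \<Longrightarrow> typed_below G N D (\<lambda>d. typing (insert_at k d G) M t D)"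
    and "typing_c G (substv_c k N C) t D \<Longrightarrow>
      typed_below G N D (\<lambda>d. typing_c (insert_at k d G) C t D)"
proof (induction G "substv k N M" t D and G "substv_c k N C" t D
    arbitrary: k N M and k N C rule: typing_typing_c.inducts)
  case (Ax G x D)
  then consider "M = Var k" "N = Var x"
    | i where "M = Var i" "i \<noteq> k" "x = (if i < k then i else i - 1)"
    by (auto simp: substv_eq_iff)
  then show ?case
  proof cases
    case 1
    then show ?thesis using typed_below_Var[OF typing_typing_c.Ax] by simp
  next
    case 2
    then show ?thesis using typing_typing_c.Ax[of "insert_at k _ G" i D]
      by (auto simp: insert_at_def intro: typed_below_trivial)
  qed
next
  case (Abs d G M' k' r D)
  from Abs(4) consider "M = Var k" "N = Lam M'"
    | M0 where "M = Lam M0" "M' = substv (Suc k) (liftv 0 N) M0"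
    by (auto simp: substv_eq_iff)
  then show ?case
  proof cases
    case 1
    then show ?thesis using typed_below_Var typing_typing_c.Abs[OF Abs(1,2)] by simp
  next
    case 2
    then show ?thesis
      using typed_below_liftv[OF Abs(3)[of "Suc k" "liftv 0 N" M0]] Abs(1)
      by (auto simp: insert_at_Suc_scons intro: typing_typing_c.Abs elim: typed_below_mono)
  qed
next
  case (App G M1 d k' r D M2)
  from App(5) consider "M = Var k" "N = App M1 M2"
    | P1 P2 where "M = App P1 P2" "M1 = substv k N P1" "M2 = substv k N P2"
    by (auto simp: substv_eq_iff)
  then show ?case
  proof cases
    case 1
    then show ?thesis using typed_below_Var typing_typing_c.App[OF App(1,3)] by simp
  next
    case 2
    then show ?thesis
      by (intro typed_below_combine[OF App(2)[of k N P1] App(4)[of k N P2]])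
        (auto intro: typing_typing_c.App)
  qed
next
  case (Cmd G M' d D a)
  then obtain M0 where "C = Cmd a M0" "M' = substv k N M0" by (auto simp: substv_eq_iff)
  then show ?case
    using Cmd(2)[of k N M0] by (auto intro: typing_typing_c.Cmd elim: typed_below_mono)
next
  case (Mu k' G C' k'' r D)
  from Mu(4) consider "M = Var k" "N = Mu C'"
    | C0 where "M = Mu C0" "C' = substv_c k (liftn 0 N) C0"
    by (auto simp: substv_eq_iff)
  then show ?case
  proof cases
    case 1
    then show ?thesis using typed_below_Var typing_typing_c.Mu[OF Mu(1,2)] by simp
  next
    case 2
    then show ?thesis
      using typed_below_liftn[OF Mu(3)[of k "liftn 0 N" C0]] Mu(1)
      by (auto intro: typing_typing_c.Mu elim: typed_below_mono)
  qed
next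
  case (And G s D t)
  show ?case
    by (rule typed_below_combine[OF And(2)[OF refl] And(4)[OF refl]]) (rule typing_typing_c.And)
next
  case (Sub G s D t)
  show ?case using Sub(3) by (auto intro: typed_below_mono[OF Sub(2)[OF refl]] typing_typing_c.Sub)
next
  case (And_c G s D t)
  show ?case
    by (rule typed_below_combine[OF And_c(2)[OF refl] And_c(4)[OF refl]])
      (rule typing_typing_c.And_c)
next
  case (Sub_c G s D t)
  show ?case
    using Sub_c(3) by (auto intro: typed_below_mono[OF Sub_c(2)[OF refl]] typing_typing_c.Sub_c)
qed (auto intro: typing_typing_c.intros typed_below_trivial)

section \<open>Inverting structural substitution and renaming\<close>

lemma strsub_eq_iff:
  "Var x = strsub j L M \<longleftrightarrow> M = Var x"
  "Lam P = strsub j L M \<longleftrightarrow> (\<exists>M0. M = Lam M0 \<and> P = strsub j (liftv 0 L) M0)"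
  "App P Q = strsub j L M \<longleftrightarrow> (\<exists>M1 M2. M = App M1 M2 \<and> P = strsub j L M1 \<and> Q = strsub j L M2)"
  "Mu C = strsub j L M \<longleftrightarrow> (\<exists>C0. M = Mu C0 \<and> C = strsub_c (Suc j) (liftn 0 L) C0)"
  by (cases M; auto; fail)+

lemma leD_Arr_Prod_antimono:
  "leD e d \<Longrightarrow> isC k \<Longrightarrow> isR r \<Longrightarrow> leD (Arr (Prod d k) r) (Arr (Prod e k) r)"
  by (rule D_arr[OF C_prod[OF _ C_refl] R_refl])

lemma typed_below_push_arg:
  assumes "typed_below G L D (\<lambda>e. typing G M (Arr (Prod d k) r) (D' e))"
    and "typing G L d D" and "isC k" and "isR r"
  shows "typed_below G L D (\<lambda>e. typing G M (push_arg e (Arr k r)) (D' e))"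
proof (rule typed_below_combine[OF assms(1)])
  show "typed_below G L D (\<lambda>e. leD e d)"
    using assms(2) unfolding typed_below_def by blast
qed (auto intro: Sub leD_Arr_Prod_antimono assms(3,4))

definition push_arg_name :: "nat \<Rightarrow> 'a ty \<Rightarrow> (nat \<Rightarrow> 'a ty) \<Rightarrow> nat \<Rightarrow> 'a ty" where
  "push_arg_name j e D = D(j := Prod e (D j))"

lemma push_arg_name_0_scons: "push_arg_name 0 e (scons k D) = scons (Prod e k) D"
  by (auto simp: push_arg_name_def scons_def fun_eq_iff)

lemma push_arg_name_Suc_scons:
  "push_arg_name (Suc j) e (scons k D) = scons k (push_arg_name j e D)"
  by (auto simp: push_arg_name_def scons_def fun_eq_iff)

lemma typing_c_Cmd_push_arg_name:
  "typing G M d (push_arg_name j e D) \<Longrightarrow>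
    typing_c G (Cmd j M) (Prod d (Prod e (D j))) (push_arg_name j e D)"
  using Cmd[of G M d "push_arg_name j e D" j] by (simp add: push_arg_name_def)

lemma typing_c_Cmd_push_arg_name_other:
  "b \<noteq> j \<Longrightarrow> typing G M d (push_arg_name j e D) \<Longrightarrow>
    typing_c G (Cmd b M) (Prod d (D b)) (push_arg_name j e D)"
  using Cmd[of G M d "push_arg_name j e D" b] by (simp add: push_arg_name_def)

text \<open>For \<open>f = True\<close> the term is a body \<open>T L\<close> produced under \<open>[\<alpha>]\<close> by the structural substitution.\<close>
lemma typing_strsub_expand:
  shows "typing G P t D \<Longrightarrow> well_sorted G D \<Longrightarrow>
      P = (if f then App (strsub j L M) L else strsub j L M) \<Longrightarrow>
      typed_below G L D
        (\<lambda>e. typing G M (if f then push_arg e t else t) (push_arg_name j e D))"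
    and "typing_c G C t D \<Longrightarrow> well_sorted G D \<Longrightarrow> C = strsub_c j L (Cmd b M) \<Longrightarrow>
      typed_below G L D
        (\<lambda>e. typing_c G (Cmd b M) (if b = j then push_arg_c e t else t) (push_arg_name j e D))"
proof (induction arbitrary: j L M f and j L b M rule: typing_typing_c.inducts)
  case (Ax G x D)
  then have "M = Var x" "\<not> f" by (auto simp: strsub_eq_iff split: if_splits)
  then show ?case by (auto intro: typed_below_trivial typing_typing_c.Ax)
next
  case (Abs d G M' k r D)
  then obtain M0 where M: "M = Lam M0" and M': "M' = strsub j (liftv 0 L) M0"
    by (auto simp: strsub_eq_iff split: if_splits)
  have "typed_below (scons d G) (liftv 0 L) D
      (\<lambda>e. typing (scons d G) M0 (Arr k r) (push_arg_name j e D))"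
    using Abs.IH[OF well_sorted_scons_var[OF Abs.hyps(1) Abs.prems(1)],
        where j = j and L = "liftv 0 L" and M = M0 and f = False] M'
    by simp
  then show ?case
    using M Abs.prems(2) Abs.hyps(1)
    by (auto intro: typing_typing_c.Abs elim!: typed_below_mono dest!: typed_below_liftv
        split: if_splits)
next
  case (App G M1 d k r D M2)
  note IH1 = App.IH(1)[OF App.prems(1), where j = j and L = L and f = False, simplified]
  show ?case
  proof (cases f)
    case False
    then obtain P1 P2 where M: "M = App P1 P2" and "M1 = strsub j L P1" "M2 = strsub j L P2"
      using App.prems(2) by (auto simp: strsub_eq_iff)
    then have "typed_below G L D (\<lambda>e. typing G P1 (Arr (Prod d k) r) (push_arg_name j e D))"
      and "typed_below G L D (\<lambda>e. typing G P2 d (push_arg_name j e D))"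
      using IH1 App.IH(2)[OF App.prems(1), where j = j and L = L and f = False] by simp_all
    with False M show ?thesis by (auto intro: typed_below_combine typing_typing_c.App)
  next
    case True
    then have "M1 = strsub j L M" and L: "M2 = L" using App.prems(2) by simp_all
    then have "typed_below G L D (\<lambda>e. typing G M (Arr (Prod d k) r) (push_arg_name j e D))"
      using IH1 by simp
    moreover have "isC k" "isR r" using typing_sorts(1)[OF App.hyps(1) App.prems(1)] by auto
    ultimately show ?thesis
      using True typed_below_push_arg App.hyps(2)[unfolded L] by simp
  qed
next
  case (Cmd G M' d D a)
  then have "b = a" and "M' = (if a = j then App (strsub j L M) L else strsub j L M)"
    by (auto split: if_splits)
  then show ?case
    using Cmd.IH[OF Cmd.prems(1), where j = j and L = L and M = M and f = "a = j"]
    by (auto intro: typing_c_Cmd_push_arg_name typing_c_Cmd_push_arg_name_other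
        elim!: typed_below_mono)
next
  case (Mu k G C k' r D)
  then obtain c M0 where M: "M = Mu (Cmd c M0)" and C: "C = strsub_c (Suc j) (liftn 0 L) (Cmd c M0)"
    by (auto simp: strsub_eq_iff split: if_splits) (metis cmd.exhaust)
  have "typed_below G (liftn 0 L) (scons k D) (\<lambda>e. typing_c G (Cmd c M0)
      (if c = Suc j then push_arg_c e (Prod (Arr k' r) k') else Prod (Arr k' r) k')
      (scons k (push_arg_name j e D)))"
    using Mu.IH[OF well_sorted_scons_name[OF Mu.hyps(1) Mu.prems(1)] C]
    by (simp add: push_arg_name_Suc_scons)
  then show ?case
    using M Mu.hyps(1) Mu.prems(2)
    by (auto intro: typing_typing_c.Mu elim!: typed_below_mono dest!: typed_below_liftn
        split: if_splits)
next
  case (And G M' s D t)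
  show ?case
    by (rule typed_below_combine[OF And.IH(1)[OF And.prems] And.IH(2)[OF And.prems]])
      (auto intro: typing_typing_c.And)
next
  case (Sub G M' s D t)
  show ?case
    by (rule typed_below_mono[OF Sub.IH[OF Sub.prems]])
      (auto intro: typing_typing_c.Sub push_arg_mono(2) Sub.hyps(2) split: if_splits)
next
  case (And_c G C s D t)
  show ?case
    by (rule typed_below_combine[OF And_c.IH(1)[OF And_c.prems] And_c.IH(2)[OF And_c.prems]])
      (auto intro: typing_typing_c.And_c)
next
  case (Omega_c G C D)
  have "isC (D j)" using Omega_c.prems(1) by (simp add: well_sorted_def)
  then have "leC (Prod Om (Prod e (D j))) (push_arg_c e Om)" if "isD e" for e
    using that by (auto intro!: C_prod C_top D_refl)
  then show ?case
    by (auto intro!: typed_below_trivial typing_typing_c.Omega_c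
        intro: Sub_c typing_c_Cmd_push_arg_name[OF Omega])
next
  case (Sub_c G C s D t)
  show ?case
    by (rule typed_below_mono[OF Sub_c.IH[OF Sub_c.prems]])
      (auto intro: typing_typing_c.Sub_c[OF _ Sub_c.hyps(2)]
        typing_typing_c.Sub_c[OF _ push_arg_mono(3)[OF _ Sub_c.hyps(2)]])
qed (auto intro: typed_below_trivial Omega)

lemma renn_eq_iff:
  "Var x = renn j a M \<longleftrightarrow> M = Var x"
  "Lam P = renn j a M \<longleftrightarrow> (\<exists>M0. M = Lam M0 \<and> P = renn j a M0)"
  "App P Q = renn j a M \<longleftrightarrow> (\<exists>M1 M2. M = App M1 M2 \<and> P = renn j a M1 \<and> Q = renn j a M2)"
  "Mu C = renn j a M \<longleftrightarrow> (\<exists>C0. M = Mu C0 \<and> C = renn_c (Suc j) (Suc a) C0)"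
  "Cmd b P = renn_c j a C1 \<longleftrightarrow>
    (\<exists>b0 M. C1 = Cmd b0 M \<and> b = (if b0 < j then b0 else if b0 = j then a else b0 - 1) \<and>
      P = renn j a M)"
  by (cases M; auto; fail)+ (cases C1; auto)

lemma typing_renn_expand:
  shows "typing G (renn j a M) t D \<Longrightarrow> typing G M t (insert_at j (D a) D)"
    and "typing_c G (renn_c j a C) t D \<Longrightarrow> typing_c G C t (insert_at j (D a) D)"
proof (induction G "renn j a M" t D and G "renn_c j a C" t D
    arbitrary: j a M and j a C rule: typing_typing_c.inducts)
  case (App G M1 d k r D M2)
  then obtain P1 P2 where "M = App P1 P2" "M1 = renn j a P1" "M2 = renn j a P2"
    by (auto simp: renn_eq_iff)
  then show ?case using App(2)[of j a P1] App(4)[of j a P2] by (auto intro: typing_typing_c.App)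
next
  case (Cmd G M' d D b)
  then obtain b0 M0 where C: "C = Cmd b0 M0" and M': "M' = renn j a M0"
    and b: "b = (if b0 < j then b0 else if b0 = j then a else b0 - 1)"
    by (auto simp: renn_eq_iff)
  have "insert_at j (D a) D b0 = D b" using b by (auto simp: insert_at_def)
  then show ?case using Cmd(2)[OF M'] typing_typing_c.Cmd[of G M0 d "insert_at j (D a) D" b0] C
    by simp
next
  case (Mu k G C' k' r D)
  then obtain C0 where "M = Mu C0" "C' = renn_c (Suc j) (Suc a) C0" by (auto simp: renn_eq_iff)
  then show ?case using Mu(1) Mu(3)[of "Suc j" "Suc a" C0]
    by (auto intro!: typing_typing_c.Mu simp: insert_at_Suc_scons)
qed (auto simp: renn_eq_iff intro: typing_typing_c.intros)

section \<open>Subject expansion\<close>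

lemma beta_expand:
  assumes "well_sorted G D" and "typing G (substv 0 N M) t D"
  shows "typing G (App (Lam M) N) t D"
proof -
  obtain d where N: "typing G N d D" and M: "typing (scons d G) M t D"
    using typed_below_witness[OF typing_substv_expand(1)[OF assms(2)] assms(1)]
    by (auto simp: insert_at_0)
  have "isD d" using typing_sorts(1)[OF N assms(1)] .
  show ?thesis
  proof (rule typing_from_arrows)
    show "isD t" using typing_sorts(1)[OF assms(2,1)] .
    fix k r assume "leD t (Arr k r)"
    with M have "typing (scons d G) M (Arr k r) D" by (rule Sub)
    then have "typing G (Lam M) (Arr (Prod d k) r) D" by (rule Abs[OF \<open>isD d\<close>])
    then show "typing G (App (Lam M) N) (Arr k r) D" using N by (rule App)
  qed
qed

lemma mu_expand:
  assumes "typing G (Mu (strsub_c 0 (liftn 0 N) C)) t D" and "well_sorted G D"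
  shows "typing G (App (Mu C) N) t D"
  using assms
proof (induction G "Mu (strsub_c 0 (liftn 0 N) C)" t D rule: typing_induct)
  case (Mu k G k' r D)
  obtain b M where C: "C = Cmd b M" by (cases C)
  have "typed_below G N D (\<lambda>e. typing_c G C
      (if b = 0 then push_arg_c e (Prod (Arr k' r) k') else Prod (Arr k' r) k')
      (scons (Prod e k) D))"
    using typing_strsub_expand(2)[OF Mu.hyps(2)[unfolded C]
        well_sorted_scons_name[OF Mu.hyps(1) Mu.prems] refl] C
    by (simp add: push_arg_name_0_scons typed_below_liftn)
  then obtain d where N: "typing G N d D" and "typing_c G C
      (if b = 0 then push_arg_c d (Prod (Arr k' r) k') else Prod (Arr k' r) k')
      (scons (Prod d k) D)"
    using Mu.prems by (auto elim!: typed_below_witness)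
  moreover have "isC (Prod d k)" using typing_sorts(1)[OF N Mu.prems] Mu.hyps(1) by simp
  ultimately have "typing G (Mu C) (Arr (Prod d k) r) D"
    by (cases "b = 0") (auto intro: typing_typing_c.Mu)
  then show ?case using N by (rule App)
qed (auto intro: typing_typing_c.And Omega Sub)

lemma ren_expand:
  assumes "well_sorted G D" and "typing_c G (renn_c 0 a C) (Prod (Arr k r) k) D"
  shows "typing_c G (Cmd a (Mu C)) (Prod (Arr (D a) r) (D a)) D"
proof -
  have "typing_c G C (Prod (Arr k r) k) (scons (D a) D)"
    using typing_renn_expand(2)[OF assms(2)] by (simp add: insert_at_0)
  then have "typing G (Mu C) (Arr (D a) r) D"
    using assms(1) by (intro Mu) (auto simp: well_sorted_def)
  then show ?thesis by (rule Cmd)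
qed

lemma typing_Lam_cong:
  fixes G :: "nat \<Rightarrow> 'a::complete_lattice ty"
  assumes "typing G (Lam M') t D" and "well_sorted G D"
    and "\<And>(G :: nat \<Rightarrow> 'a ty) D t. well_sorted G D \<Longrightarrow> typing G M' t D \<Longrightarrow> typing G M t D"
  shows "typing G (Lam M) t D"
  using assms(1,2)
proof (induction G "Lam M'" t D rule: typing_induct)
  case (Abs d G k r D)
  have "typing (scons d G) M (Arr k r) D"
    using assms(3)[OF well_sorted_scons_var[OF Abs.hyps(1) Abs.prems] Abs.hyps(2)] .
  then show ?case by (rule typing_typing_c.Abs[OF Abs.hyps(1)])
qed (auto intro: typing_typing_c.intros)

lemma typing_App_cong_left:
  fixes G :: "nat \<Rightarrow> 'a::complete_lattice ty"
  assumes "typing G (App M' N) t D" and "well_sorted G D"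
    and "\<And>(G :: nat \<Rightarrow> 'a ty) D t. well_sorted G D \<Longrightarrow> typing G M' t D \<Longrightarrow> typing G M t D"
  shows "typing G (App M N) t D"
  using assms(1,2)
proof (induction G "App M' N" t D rule: typing_induct)
  case (App G d k r D)
  have "typing G M (Arr (Prod d k) r) D" using assms(3)[OF App.prems App(1)] .
  then show ?case using App(3) by (rule typing_typing_c.App)
qed (auto intro: typing_typing_c.intros)

lemma typing_App_cong_right:
  fixes G :: "nat \<Rightarrow> 'a::complete_lattice ty"
  assumes "typing G (App M N') t D" and "well_sorted G D"
    and "\<And>(G :: nat \<Rightarrow> 'a ty) D t. well_sorted G D \<Longrightarrow> typing G N' t D \<Longrightarrow> typing G N t D"
  shows "typing G (App M N) t D"
  using assms(1,2)
proof (induction G "App M N'" t D rule: typing_induct)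
  case (App G d k r D)
  have "typing G N d D" using assms(3)[OF App.prems App(3)] .
  with App(1) show ?case by (rule typing_typing_c.App)
qed (auto intro: typing_typing_c.intros)

lemma typing_Mu_cong:
  fixes G :: "nat \<Rightarrow> 'a::complete_lattice ty"
  assumes "typing G (Mu C') t D" and "well_sorted G D"
    and "\<And>(G :: nat \<Rightarrow> 'a ty) D k r. well_sorted G D \<Longrightarrow> typing_c G C' (Prod (Arr k r) k) D \<Longrightarrow>
      \<exists>k'. typing_c G C (Prod (Arr k' r) k') D"
  shows "typing G (Mu C) t D"
  using assms(1,2)
proof (induction G "Mu C'" t D rule: typing_induct)
  case (Mu k G k' r D)
  obtain k'' where "typing_c G C (Prod (Arr k'' r) k'') (scons k D)"
    using assms(3)[OF well_sorted_scons_name[OF Mu.hyps(1) Mu.prems] Mu.hyps(2)] by blast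
  then show ?case by (rule typing_typing_c.Mu[OF Mu.hyps(1)])
qed (auto intro: typing_typing_c.intros)

lemma typing_c_Cmd_cong:
  fixes G :: "nat \<Rightarrow> 'a::complete_lattice ty"
  assumes "typing_c G (Cmd a M') t D" and "well_sorted G D"
    and "\<And>(G :: nat \<Rightarrow> 'a ty) D t. well_sorted G D \<Longrightarrow> typing G M' t D \<Longrightarrow> typing G M t D"
  shows "typing_c G (Cmd a M) t D"
  using assms(1,2)
proof (induction G "Cmd a M'" t D rule: typing_typing_c.inducts(2)[where ?P1.0 = "\<lambda>_ _ _ _. True"])
  case (Cmd G d D)
  then have "typing G M d D" using assms(3) by blast
  then show ?case by (rule typing_typing_c.Cmd)
qed (auto intro: typing_typing_c.intros)

lemma red_expand:
  shows "red M N \<Longrightarrow> well_sorted G D \<Longrightarrow> typing G N t D \<Longrightarrow> typing G M t D"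
    and "red_c C C' \<Longrightarrow> well_sorted G D \<Longrightarrow> typing_c G C' (Prod (Arr k r) k) D \<Longrightarrow>
      \<exists>k'. typing_c G C (Prod (Arr k' r) k') D"
proof (induction arbitrary: G D t and G D k r rule: red_red_c.inducts)
  case (beta M N)
  then show ?case by (rule beta_expand)
next
  case (mu C N)
  show ?case using mu_expand[OF mu.prems(2,1)] .
next
  case (ren a C)
  show ?case using ren_expand[OF ren.prems] by blast
next
  case (lam M M')
  show ?case using typing_Lam_cong[OF lam.prems(2,1) lam.IH] .
next
  case (appL M M' N)
  show ?case using typing_App_cong_left[OF appL.prems(2,1) appL.IH] .
next
  case (appR N N' M)
  show ?case using typing_App_cong_right[OF appR.prems(2,1) appR.IH] .
next
  case (muC C C')
  show ?case using typing_Mu_cong[OF muC.prems(2,1) muC.IH] .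
next
  case (cmd M M' a)
  show ?case using typing_c_Cmd_cong[OF cmd.prems(2,1) cmd.IH] by blast
qed

theorem theorem5p5:
  fixes G :: "nat \<Rightarrow> 'a::complete_lattice ty" and D :: "nat \<Rightarrow> 'a ty"
  assumes "omega_algebraic TYPE('a)"
    and "\<forall>x. isD (G x)" and "finite {x. G x \<noteq> Om}"
    and "\<forall>a. isC (D a)" and "finite {a. D a \<noteq> Om}"
    and "red M N"
    and "typing G N d D"
  shows "typing G M d D"
  using red_expand(1)[OF assms(6) _ assms(7)] assms(2,4) by (simp add: well_sorted_def)

end
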